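(* Let $M=I=[0,1]$ or $M=\mathbb{S}^1$, and let $\mathrm{Diff}_+^{1+BV}(M)$ (orientation-preserving $C^1$ diffeomorphisms of $M$ whose derivative has bounded variation) be endowed with the metric $$d(f,g)=\sup_{x\in M} d_M(f(x),g(x))+\|\log f'-\log g'\|_{BV}.$$ Let $\mathrm{Diff}_+^{1+AC}(M)$ be the subgroup of those $f$ whose derivative $f'$ is absolutely continuous. Then for every $g\in \mathrm{Diff}_+^{1+BV}(M)\setminus \mathrm{Diff}_+^{1+AC}(M)$, the left multiplication map $f\mapsto g\circ f$, $\mathrm{Diff}_+^{1+BV}(M)\to\mathrm{Diff}_+^{1+BV}(M)$, is not continuous with respect to $d$.
   Context: $\mathbb{S}^1$ is $I$ with $0\sim 1$, with metric $d_{\mathbb{S}^1}([x],[y])=|e^{2\pi ix}-e^{2\pi iy}|$; $d_I$ is the usual metric. Derivatives of circle diffeomorphisms are defined via the lift $\tilde f$ ($\tilde f(0)\in[0,1)$, $\tilde f(x+1)=\tilde f(x)+1$) by $f'(x)=\tilde f'(x)$ for $x\in I$. For $F\in C(I)$ of bounded variation, $V(F)=\sup\sum_{i=1}^m|F(x_i)-F(x_{i-1})|$ over partitions $0=x_0<\dots<x_m=1$, and $\|F\|_{BV}=|F(0)|+V(F)$. *)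

theory Defs
  imports "HOL-Analysis.Analysis"
begin

datatype space = Intv | Circ

definition partition01 :: "nat \<Rightarrow> (nat \<Rightarrow> real) \<Rightarrow> bool" where
  "partition01 m xs \<longleftrightarrow> xs 0 = 0 \<and> xs m = 1 \<and> (\<forall>i<m. xs i < xs (Suc i))"

definition var_sums :: "(real \<Rightarrow> real) \<Rightarrow> real set" where
  "var_sums F = {(\<Sum>i<m. \<bar>F (xs (Suc i)) - F (xs i)\<bar>) | m xs. partition01 m xs}"

definition bv01 :: "(real \<Rightarrow> real) \<Rightarrow> bool" where
  "bv01 F \<longleftrightarrow> bdd_above (var_sums F)"

text \<open>Total variation V(F) on I (meaningful when bv01 F).\<close>
definition V01 :: "(real \<Rightarrow> real) \<Rightarrow> real" where
  "V01 F = Sup (var_sums F)"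

definition BVnorm :: "(real \<Rightarrow> real) \<Rightarrow> real" where
  "BVnorm F = \<bar>F 0\<bar> + V01 F"

definition abs_cont01 :: "(real \<Rightarrow> real) \<Rightarrow> bool" where
  "abs_cont01 F \<longleftrightarrow> (\<forall>\<epsilon>>0. \<exists>\<delta>>0. \<forall>(n::nat) (a::nat \<Rightarrow> real) b.
      (\<forall>i<n. 0 \<le> a i \<and> a i \<le> b i \<and> b i \<le> 1) \<and>
      (\<forall>i<n. \<forall>j<n. i \<noteq> j \<longrightarrow> b i \<le> a j \<or> b j \<le> a i) \<and>
      (\<Sum>i<n. b i - a i) < \<delta> \<longrightarrow> (\<Sum>i<n. \<bar>F (b i) - F (a i)\<bar>) < \<epsilon>)"

text \<open>Derivative f'(x) for x in I.  For M = I, f is the diffeomorphism itself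
  (one-sided derivatives at the endpoints); for M = S^1, f is the normalized lift.\<close>
definition D :: "(real \<Rightarrow> real) \<Rightarrow> real \<Rightarrow> real" where
  "D f x = vector_derivative f (at x within {0..1})"

text \<open>For M = S^1: represented by the
  lift F with F 0 in [0,1) and F (x+1) = F x + 1, F C^1 with positive derivative.\<close>
fun Diff1 :: "space \<Rightarrow> (real \<Rightarrow> real) set" where
  "Diff1 Intv = {f. f 0 = 0 \<and> f 1 = 1 \<and> (\<exists>f'. continuous_on {0..1} f' \<and>
        (\<forall>x\<in>{0..1}. (f has_real_derivative f' x) (at x within {0..1}) \<and> f' x > 0))}"
| "Diff1 Circ = {F. 0 \<le> F 0 \<and> F 0 < 1 \<and> (\<forall>x. F (x + 1) = F x + 1) \<and>
        (\<exists>F'. continuous_on UNIV F' \<and> (\<forall>x. (F has_real_derivative F' x) (at x) \<and> F' x > 0))}"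

definition Diff1BV :: "space \<Rightarrow> (real \<Rightarrow> real) set" where
  "Diff1BV M = {f \<in> Diff1 M. bv01 (D f)}"

definition Diff1AC :: "space \<Rightarrow> (real \<Rightarrow> real) set" where
  "Diff1AC M = {f \<in> Diff1BV M. abs_cont01 (D f)}"

text \<open>Distance on M, on representatives (for S^1: points of R modulo 1).\<close>
fun distM :: "space \<Rightarrow> real \<Rightarrow> real \<Rightarrow> real" where
  "distM Intv x y = \<bar>x - y\<bar>"
| "distM Circ x y = cmod (cis (2 * pi * x) - cis (2 * pi * y))"

definition dDiff :: "space \<Rightarrow> (real \<Rightarrow> real) \<Rightarrow> (real \<Rightarrow> real) \<Rightarrow> real" where
  "dDiff M f g = (SUP x\<in>{0..1}. distM M (f x) (g x)) + BVnorm (\<lambda>x. ln (D f x) - ln (D g x))"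

text \<open>Composition g o f in Diff(M); for S^1 the lift G o F is renormalized so that its value at 0
  lies in [0,1).\<close>
fun compM :: "space \<Rightarrow> (real \<Rightarrow> real) \<Rightarrow> (real \<Rightarrow> real) \<Rightarrow> (real \<Rightarrow> real)" where
  "compM Intv g f = g \<circ> f"
| "compM Circ g f = (\<lambda>x. g (f x) - of_int \<lfloor>g (f 0)\<rfloor>)"

end

theory Submission
  imports Defs
begin

text \<open>Suppose left multiplication by g were continuous at the identity. The maps
  h_t(x) = x + t sin^2(\<pi> x) are diffeomorphisms of both I and S^1 with d(id, h_t) = O(t), and
  log (g \<circ> h_t)' = \<phi> \<circ> h_t + log h_t' for \<phi> = log g'. Hence V(\<phi> - \<phi> \<circ> h_t) \<rightarrow> 0 as t \<rightarrow> 0.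
  Averaging over t \<in> [0,T] splits \<phi> into the mean of \<phi> \<circ> h_t, which is a difference quotient of a
  primitive of \<phi> and hence Lipschitz away from the endpoints, plus the mean of \<phi> - \<phi> \<circ> h_t, whose
  variation is small; near the endpoints the variation of the continuous BV function \<phi> is small
  anyway. So \<phi>, and with it g' = exp \<phi>, is absolutely continuous.\<close>

section \<open>Partitions and variation sums\<close>

definition is_partition :: "real \<Rightarrow> real \<Rightarrow> nat \<Rightarrow> (nat \<Rightarrow> real) \<Rightarrow> bool" where
  "is_partition u v m xs \<longleftrightarrow> xs 0 = u \<and> xs m = v \<and> (\<forall>i<m. xs i < xs (Suc i))"

definition variation_sum :: "(real \<Rightarrow> real) \<Rightarrow> nat \<Rightarrow> (nat \<Rightarrow> real) \<Rightarrow> real" where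
  "variation_sum F m xs = (\<Sum>i<m. \<bar>F (xs (Suc i)) - F (xs i)\<bar>)"

lemma var_sums_eq: "var_sums F = {variation_sum F m xs | m xs. is_partition 0 1 m xs}"
  by (simp add: var_sums_def variation_sum_def partition01_def is_partition_def)

lemma is_partition_mono:
  assumes "is_partition u v m xs" "i \<le> j" "j \<le> m"
  shows "xs i \<le> xs j"
  using assms(2,3)
proof (induction j)
  case (Suc j)
  show ?case
  proof (cases "i = Suc j")
    case False
    then have "xs i \<le> xs j" using Suc by auto
    also have "xs j < xs (Suc j)" using assms(1) Suc.prems unfolding is_partition_def by auto
    finally show ?thesis by simp
  qed simp
qed simp

lemma is_partition_range:
  assumes "is_partition u v m xs" "i \<le> m"
  shows "xs i \<in> {u..v}"
  using is_partition_mono[OF assms(1), of 0 i] is_partition_mono[OF assms(1), of i m] assms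
  unfolding is_partition_def by auto

lemma is_partition_trivial: "u < v \<Longrightarrow> is_partition u v 1 (\<lambda>i. if i = 0 then u else v)"
  unfolding is_partition_def by auto

lemma is_partition_snoc:
  assumes "is_partition u w m xs" "w < v"
  shows "is_partition u v (Suc m) (xs(Suc m := v))"
    and "variation_sum F (Suc m) (xs(Suc m := v)) = variation_sum F m xs + \<bar>F v - F w\<bar>"
proof -
  show "is_partition u v (Suc m) (xs(Suc m := v))"
    using assms unfolding is_partition_def by (auto simp: less_Suc_eq)
  have "variation_sum F m (xs(Suc m := v)) = variation_sum F m xs"
    unfolding variation_sum_def by (rule sum.cong) auto
  then show "variation_sum F (Suc m) (xs(Suc m := v)) = variation_sum F m xs + \<bar>F v - F w\<bar>"
    using assms unfolding variation_sum_def is_partition_def by simp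
qed

lemma is_partition_extend:
  assumes "is_partition u w m xs" "w \<le> v"
  obtains m' xs' where "is_partition u v m' xs'" "variation_sum F m xs \<le> variation_sum F m' xs'"
proof (cases "w = v")
  case False
  then show ?thesis
    using that is_partition_snoc(1)[OF assms(1)] is_partition_snoc(2)[OF assms(1), of v F] assms(2)
    by force
qed (use that assms in auto)

lemma is_partition_append:
  assumes "is_partition u w m xs" "w < b" "b \<le> v"
  obtains m' xs' where "is_partition u v m' xs'"
    "variation_sum F m xs + \<bar>F b - F w\<bar> \<le> variation_sum F m' xs'"
  using is_partition_extend[OF is_partition_snoc(1)[OF assms(1,2)] assms(3)]
    is_partition_snoc(2)[OF assms(1,2)] by metis

lemma is_partition_image:
  assumes "is_partition 0 1 m xs" "h 0 = 0" "h 1 = 1"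
    and "\<And>x y. x \<in> {0..1} \<Longrightarrow> y \<in> {0..1} \<Longrightarrow> x < y \<Longrightarrow> h x < h y"
  shows "is_partition 0 1 m (\<lambda>i. h (xs i))"
  using assms is_partition_range[OF assms(1)] unfolding is_partition_def by auto

lemma variation_sum_comp: "variation_sum (\<lambda>x. F (h x)) m xs = variation_sum F m (\<lambda>i. h (xs i))"
  by (simp add: variation_sum_def)

lemma is_partition_reflect:
  assumes "is_partition 0 1 m xs"
  shows "is_partition 0 1 m (\<lambda>i. 1 - xs (m - i))"
    and "variation_sum (\<lambda>x. F (1 - x)) m (\<lambda>i. 1 - xs (m - i)) = variation_sum F m xs"
proof -
  show "is_partition 0 1 m (\<lambda>i. 1 - xs (m - i))"
    unfolding is_partition_def
  proof (intro conjI allI impI)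
    fix i assume "i < m"
    then have "m - i = Suc (m - Suc i)" by auto
    then show "1 - xs (m - i) < 1 - xs (m - Suc i)"
      using assms \<open>i < m\<close> unfolding is_partition_def by auto
  qed (use assms in \<open>auto simp: is_partition_def\<close>)
  have "variation_sum (\<lambda>x. F (1 - x)) m (\<lambda>i. 1 - xs (m - i))
      = (\<Sum>i<m. \<bar>F (xs (m - Suc i)) - F (xs (Suc (m - Suc i)))\<bar>)"
    unfolding variation_sum_def by (rule sum.cong) (auto simp: Suc_diff_Suc)
  also have "\<dots> = (\<Sum>i<m. \<bar>F (xs i) - F (xs (Suc i))\<bar>)"
    by (rule sum.nat_diff_reindex)
  finally show "variation_sum (\<lambda>x. F (1 - x)) m (\<lambda>i. 1 - xs (m - i)) = variation_sum F m xs"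
    unfolding variation_sum_def by (simp add: abs_minus_commute)
qed

lemma variation_sum_cong:
  assumes "is_partition u v m xs" "\<And>x. x \<in> {u..v} \<Longrightarrow> F x = G x"
  shows "variation_sum F m xs = variation_sum G m xs"
  unfolding variation_sum_def
  using assms is_partition_range[OF assms(1)] by (intro sum.cong) auto

lemma variation_sum_nonneg: "0 \<le> variation_sum F m xs"
  unfolding variation_sum_def by (auto intro: sum_nonneg)

lemma variation_sum_add_le:
  "variation_sum (\<lambda>x. F x + G x) m xs \<le> variation_sum F m xs + variation_sum G m xs"
  unfolding variation_sum_def sum.distrib[symmetric] by (rule sum_mono) linarith

lemma variation_sum_diff_le:
  "variation_sum (\<lambda>x. F x - G x) m xs \<le> variation_sum F m xs + variation_sum G m xs"
  unfolding variation_sum_def sum.distrib[symmetric] by (rule sum_mono) linarith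

lemma bv01_of_variation_sum_bound:
  assumes "\<And>m xs. is_partition 0 1 m xs \<Longrightarrow> variation_sum F m xs \<le> L"
  shows "bv01 F" and "V01 F \<le> L"
proof -
  have ne: "var_sums F \<noteq> {}"
    using is_partition_trivial[of 0 1] unfolding var_sums_eq by force
  have ub: "y \<le> L" if "y \<in> var_sums F" for y
    using that assms unfolding var_sums_eq by force
  show "bv01 F" unfolding bv01_def bdd_above_def using ub by blast
  show "V01 F \<le> L" unfolding V01_def by (rule cSup_least[OF ne ub])
qed

lemma variation_sum_le_V01:
  assumes "bv01 F" "is_partition 0 1 m xs"
  shows "variation_sum F m xs \<le> V01 F"
  unfolding V01_def
  by (rule cSup_upper) (use assms in \<open>auto simp: var_sums_eq bv01_def\<close>)

lemma bv01_cong: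
  assumes "bv01 F" "\<And>x. x \<in> {0..1} \<Longrightarrow> F x = G x"
  shows "bv01 G"
proof (rule bv01_of_variation_sum_bound(1))
  fix m xs assume P: "is_partition 0 1 m xs"
  show "variation_sum G m xs \<le> V01 F"
    using variation_sum_cong[OF P assms(2)] variation_sum_le_V01[OF assms(1) P] by simp
qed

lemma bv01_diff:
  assumes "bv01 F" "bv01 G"
  shows "bv01 (\<lambda>x. F x - G x)"
  using variation_sum_diff_le variation_sum_le_V01[OF assms(1)] variation_sum_le_V01[OF assms(2)]
  by (intro bv01_of_variation_sum_bound(1)[where L = "V01 F + V01 G"]) (meson add_mono order_trans)

lemma lipschitz_on_real_deriv_bound:
  fixes f f' :: "real \<Rightarrow> real"
  assumes "convex S" "\<And>x. x \<in> S \<Longrightarrow> (f has_real_derivative f' x) (at x within S)"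
    and "\<And>x. x \<in> S \<Longrightarrow> \<bar>f' x\<bar> \<le> B" "0 \<le> B"
  shows "B-lipschitz_on S f"
  using field_differentiable_bound[OF assms(1,2)] assms(3,4)
  by (intro lipschitz_onI) (auto simp: dist_real_def)

lemma lipschitz_on_divide:
  fixes A B :: "real \<Rightarrow> real"
  assumes "LA-lipschitz_on S A" "LB-lipschitz_on S B"
    and "\<And>x. x \<in> S \<Longrightarrow> \<bar>A x\<bar> \<le> MA" "\<And>x. x \<in> S \<Longrightarrow> c \<le> B x" "0 < c" "0 \<le> MA"
  shows "(LA / c + MA * LB / c\<^sup>2)-lipschitz_on S (\<lambda>x. A x / B x)"
proof (rule lipschitz_onI)
  have "0 \<le> LA" "0 \<le> LB" using assms(1,2) lipschitz_on_nonneg by auto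
  show "0 \<le> LA / c + MA * LB / c\<^sup>2" using \<open>0 \<le> LA\<close> \<open>0 \<le> LB\<close> assms(5,6) by simp
  fix x y assume "x \<in> S" "y \<in> S"
  have pos: "0 < B x" "0 < B y" using assms(4,5) \<open>x \<in> S\<close> \<open>y \<in> S\<close> by (auto intro: less_le_trans)
  have dA: "\<bar>A x - A y\<bar> \<le> LA * \<bar>x - y\<bar>" and dB: "\<bar>B y - B x\<bar> \<le> LB * \<bar>x - y\<bar>"
    using lipschitz_onD[OF assms(1) \<open>x \<in> S\<close> \<open>y \<in> S\<close>] lipschitz_onD[OF assms(2) \<open>x \<in> S\<close> \<open>y \<in> S\<close>]
    by (auto simp: dist_real_def abs_minus_commute)
  have "A x / B x - A y / B y = (A x - A y) / B x + A y * (B y - B x) / (B x * B y)"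
    using pos by (simp add: field_simps)
  then have "\<bar>A x / B x - A y / B y\<bar> \<le> \<bar>(A x - A y) / B x\<bar> + \<bar>A y * (B y - B x) / (B x * B y)\<bar>"
    by (metis abs_triangle_ineq)
  moreover have "\<bar>(A x - A y) / B x\<bar> \<le> LA * \<bar>x - y\<bar> / c"
    using dA pos assms(4,5) \<open>x \<in> S\<close> \<open>0 \<le> LA\<close> less_imp_le[OF pos(1)]
    by (simp add: abs_divide frac_le)
  moreover have "\<bar>A y * (B y - B x) / (B x * B y)\<bar> \<le> MA * (LB * \<bar>x - y\<bar>) / c\<^sup>2"
  proof -
    have "\<bar>A y\<bar> * \<bar>B y - B x\<bar> \<le> MA * (LB * \<bar>x - y\<bar>)"
      using assms(3)[OF \<open>y \<in> S\<close>] dB by (intro mult_mono) auto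
    moreover have "c\<^sup>2 \<le> B x * B y"
      unfolding power2_eq_square using assms(4,5) \<open>x \<in> S\<close> \<open>y \<in> S\<close> pos
      by (intro mult_mono) auto
    ultimately have "\<bar>A y\<bar> * \<bar>B y - B x\<bar> / (B x * B y) \<le> MA * (LB * \<bar>x - y\<bar>) / c\<^sup>2"
      using \<open>0 \<le> LB\<close> assms(5,6) by (intro frac_le) auto
    then show ?thesis using pos by (simp add: abs_divide abs_mult)
  qed
  ultimately have "\<bar>A x / B x - A y / B y\<bar> \<le> LA * \<bar>x - y\<bar> / c + MA * (LB * \<bar>x - y\<bar>) / c\<^sup>2"
    by linarith
  then show "dist (A x / B x) (A y / B y) \<le> (LA / c + MA * LB / c\<^sup>2) * dist x y"
    unfolding dist_real_def by (simp add: distrib_right)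
qed

lemma ln_lipschitz: "0 < c \<Longrightarrow> (1 / c)-lipschitz_on {c..} ln"
  by (rule lipschitz_on_real_deriv_bound[where f' = inverse])
    (auto intro!: derivative_eq_intros simp: divide_simps)

lemma exp_lipschitz: "(exp B)-lipschitz_on {..B} exp"
  by (rule lipschitz_on_real_deriv_bound[where f' = exp]) (auto intro!: derivative_eq_intros)

lemma variation_sum_le_lipschitz:
  assumes "is_partition 0 1 m xs" "L-lipschitz_on {0..1} F"
  shows "variation_sum F m xs \<le> L"
proof -
  have "variation_sum F m xs \<le> (\<Sum>i<m. L * (xs (Suc i) - xs i))"
    unfolding variation_sum_def
  proof (rule sum_mono)
    fix i assume "i \<in> {..<m}"
    then have "xs i \<in> {0..1}" "xs (Suc i) \<in> {0..1}" "xs i < xs (Suc i)"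
      using is_partition_range[OF assms(1)] assms(1) unfolding is_partition_def by auto
    then show "\<bar>F (xs (Suc i)) - F (xs i)\<bar> \<le> L * (xs (Suc i) - xs i)"
      using lipschitz_onD[OF assms(2), of "xs (Suc i)" "xs i"] by (simp add: dist_real_def)
  qed
  also have "\<dots> = L * (xs m - xs 0)"
    by (simp add: sum_distrib_left[symmetric] sum_lessThan_telescope)
  finally show ?thesis using assms(1) unfolding is_partition_def by simp
qed

lemma bv01_ln:
  assumes "bv01 F" "0 < c" "\<And>x. x \<in> {0..1} \<Longrightarrow> c \<le> F x"
  shows "bv01 (\<lambda>x. ln (F x))"
proof (rule bv01_of_variation_sum_bound(1))
  fix m xs assume P: "is_partition 0 1 m xs"
  have "variation_sum (\<lambda>x. ln (F x)) m xs \<le> (\<Sum>i<m. \<bar>F (xs (Suc i)) - F (xs i)\<bar> / c)"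
    unfolding variation_sum_def
  proof (rule sum_mono)
    fix i assume "i \<in> {..<m}"
    then have "F (xs i) \<in> {c..}" "F (xs (Suc i)) \<in> {c..}"
      using assms(3) is_partition_range[OF P] by auto
    from lipschitz_onD[OF ln_lipschitz[OF assms(2)] this(2,1)]
    show "\<bar>ln (F (xs (Suc i))) - ln (F (xs i))\<bar> \<le> \<bar>F (xs (Suc i)) - F (xs i)\<bar> / c"
      by (simp add: dist_real_def)
  qed
  also have "\<dots> = variation_sum F m xs / c" by (simp add: variation_sum_def sum_divide_distrib)
  also have "\<dots> \<le> V01 F / c"
    using variation_sum_le_V01[OF assms(1) P] assms(2) by (simp add: divide_right_mono)
  finally show "variation_sum (\<lambda>x. ln (F x)) m xs \<le> V01 F / c" .
qed

section \<open>Finite families of non-overlapping intervals\<close>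

definition disjoint_intervals ::
    "real \<Rightarrow> real \<Rightarrow> 'i set \<Rightarrow> ('i \<Rightarrow> real) \<Rightarrow> ('i \<Rightarrow> real) \<Rightarrow> bool" where
  "disjoint_intervals u v I a b \<longleftrightarrow> finite I \<and> (\<forall>i\<in>I. u \<le> a i \<and> a i \<le> b i \<and> b i \<le> v) \<and>
     (\<forall>i\<in>I. \<forall>j\<in>I. i \<noteq> j \<longrightarrow> b i \<le> a j \<or> b j \<le> a i)"

definition interval_variation ::
    "(real \<Rightarrow> real) \<Rightarrow> 'i set \<Rightarrow> ('i \<Rightarrow> real) \<Rightarrow> ('i \<Rightarrow> real) \<Rightarrow> real" where
  "interval_variation F I a b = (\<Sum>i\<in>I. \<bar>F (b i) - F (a i)\<bar>)"

lemma abs_cont01_iff: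
  "abs_cont01 F \<longleftrightarrow> (\<forall>\<epsilon>>0. \<exists>\<delta>>0. \<forall>n a b. disjoint_intervals 0 1 {..<n::nat} a b \<and>
     (\<Sum>i<n. b i - a i) < \<delta> \<longrightarrow> interval_variation F {..<n} a b < \<epsilon>)"
  unfolding abs_cont01_def disjoint_intervals_def interval_variation_def by (simp add: Ball_def)

lemma disjoint_intervalsD:
  assumes "disjoint_intervals u v I a b" "i \<in> I"
  shows "u \<le> a i" "a i \<le> b i" "b i \<le> v"
  using assms unfolding disjoint_intervals_def by auto

lemma interval_variation_cong:
  assumes "disjoint_intervals u v I a b" "\<And>x. x \<in> {u..v} \<Longrightarrow> F x = G x"
  shows "interval_variation F I a b = interval_variation G I a b"
  using assms unfolding disjoint_intervals_def interval_variation_def by (intro sum.cong) auto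

lemma disjoint_intervals_subset:
  "disjoint_intervals u v I a b \<Longrightarrow> p \<le> u \<Longrightarrow> v \<le> q \<Longrightarrow> disjoint_intervals p q I a b"
  unfolding disjoint_intervals_def by force

lemma disjoint_intervals_mono_image:
  assumes "disjoint_intervals u v I a b" "mono c" "\<And>x. x \<in> {u..v} \<Longrightarrow> c x \<in> {p..q}"
  shows "disjoint_intervals p q I (\<lambda>i. c (a i)) (\<lambda>i. c (b i))"
  using assms unfolding disjoint_intervals_def mono_def by (smt (verit) atLeastAtMost_iff)

lemma disjoint_intervals_partition:
  assumes "is_partition u v m xs"
  shows "disjoint_intervals u v {..<m} xs (\<lambda>i. xs (Suc i))"
  unfolding disjoint_intervals_def
proof (intro conjI ballI impI)
  fix i j assume "i \<in> {..<m}" "j \<in> {..<m}" "i \<noteq> j"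
  then show "xs (Suc i) \<le> xs j \<or> xs (Suc j) \<le> xs i"
    using is_partition_mono[OF assms, of "Suc i" j] is_partition_mono[OF assms, of "Suc j" i]
    by (cases "i < j") auto
qed (use is_partition_range[OF assms] is_partition_mono[OF assms] in auto)

lemma disjoint_intervals_Un:
  fixes a b :: "'i \<Rightarrow> real" and c d :: "'j \<Rightarrow> real"
  assumes "disjoint_intervals u w I a b" "disjoint_intervals w v J c d" "u \<le> w" "w \<le> v"
  shows "disjoint_intervals u v (Inl ` I \<union> Inr ` J) (case_sum a c) (case_sum b d)"
    and "interval_variation F (Inl ` I \<union> Inr ` J) (case_sum a c) (case_sum b d)
           = interval_variation F I a b + interval_variation F J c d"
proof -
  show "disjoint_intervals u v (Inl ` I \<union> Inr ` J) (case_sum a c) (case_sum b d)"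
    using assms unfolding disjoint_intervals_def by (fastforce dest: bspec)
  have "interval_variation F (Inl ` I \<union> Inr ` J) (case_sum a c) (case_sum b d)
      = interval_variation F (Inl ` I) (case_sum a c) (case_sum b d)
        + interval_variation F (Inr ` J) (case_sum a c) (case_sum b d)"
    unfolding interval_variation_def
    using assms unfolding disjoint_intervals_def by (intro sum.union_disjoint) auto
  then show "interval_variation F (Inl ` I \<union> Inr ` J) (case_sum a c) (case_sum b d)
           = interval_variation F I a b + interval_variation F J c d"
    unfolding interval_variation_def by (simp add: sum.reindex)
qed

lemma interval_variation_le_variation_sum:
  assumes "u \<le> v" "disjoint_intervals u v I a b"
  obtains m xs where "is_partition u v m xs" "interval_variation F I a b \<le> variation_sum F m xs"
proof -
  have "finite I" using assms(2) unfolding disjoint_intervals_def by simp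
  \<comment> \<open>add the intervals from left to right, each one extending a partition of the part to its left\<close>
  then have "\<forall>v. u \<le> v \<longrightarrow> disjoint_intervals u v I a b \<longrightarrow>
      (\<exists>m xs. is_partition u v m xs \<and> interval_variation F I a b \<le> variation_sum F m xs)"
  proof (induction rule: finite_ranking_induct[where f = a])
    case empty
    have "is_partition u u 0 (\<lambda>i. u)" by (simp add: is_partition_def)
    then show ?case
      using is_partition_extend variation_sum_nonneg by (fastforce simp: interval_variation_def)
  next
    case (insert x S)
    show ?case
    proof (intro allI impI)
      fix v assume "u \<le> v" and fam: "disjoint_intervals u v (insert x S) a b"
      then have famS: "disjoint_intervals u v S a b" and x: "u \<le> a x" "a x \<le> b x" "b x \<le> v"
        unfolding disjoint_intervals_def by auto
      show "\<exists>m xs. is_partition u v m xs \<and> interval_variation F (insert x S) a b \<le> variation_sum F m xs"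
      proof (cases "x \<in> S \<or> a x = b x")
        case True
        then have "interval_variation F (insert x S) a b = interval_variation F S a b"
          using insert.hyps(1) by (cases "x \<in> S") (auto simp: interval_variation_def insert_absorb)
        then show ?thesis using insert.IH \<open>u \<le> v\<close> famS by simp
      next
        case False
        then have ab: "a x < b x" and xS: "x \<notin> S" using x by auto
        have "b y \<le> a x" if "y \<in> S" for y
          using fam that xS insert.hyps(2)[OF that] ab unfolding disjoint_intervals_def by force
        then have "disjoint_intervals u (a x) S a b"
          using famS unfolding disjoint_intervals_def by auto
        then obtain m xs where P: "is_partition u (a x) m xs"
            and le: "interval_variation F S a b \<le> variation_sum F m xs"
          using insert.IH x(1) by blast
        obtain m' xs' where "is_partition u v m' xs'"
            "variation_sum F m xs + \<bar>F (b x) - F (a x)\<bar> \<le> variation_sum F m' xs'"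
          using is_partition_append[OF P ab x(3)] .
        moreover have "interval_variation F (insert x S) a b
            = interval_variation F S a b + \<bar>F (b x) - F (a x)\<bar>"
          using xS insert.hyps(1) by (simp add: interval_variation_def)
        ultimately show ?thesis using le by force
      qed
    qed
  qed
  then show ?thesis using assms that by blast
qed

lemma interval_variation_le_bound:
  assumes "\<And>m xs. is_partition 0 1 m xs \<Longrightarrow> variation_sum F m xs \<le> e"
    and "disjoint_intervals 0 1 I a b"
  shows "interval_variation F I a b \<le> e"
  using interval_variation_le_variation_sum[OF zero_le_one assms(2)] assms(1) by (metis order_trans)

lemma interval_variation_le_V01:
  assumes "bv01 F" "disjoint_intervals 0 1 I a b"
  shows "interval_variation F I a b \<le> V01 F"
  using interval_variation_le_bound[OF variation_sum_le_V01[OF assms(1)] assms(2)] .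

lemma interval_variation_add_le:
  "interval_variation (\<lambda>x. F x + G x) I a b \<le> interval_variation F I a b + interval_variation G I a b"
  unfolding interval_variation_def sum.distrib[symmetric] by (rule sum_mono) linarith

lemma interval_variation_le_lipschitz:
  assumes "K-lipschitz_on {u..v} F" "disjoint_intervals u v I a b"
  shows "interval_variation F I a b \<le> K * (\<Sum>i\<in>I. b i - a i)"
  unfolding interval_variation_def sum_distrib_left
proof (rule sum_mono)
  fix i assume "i \<in> I"
  then have "a i \<in> {u..v}" "b i \<in> {u..v}" "a i \<le> b i"
    using assms(2) unfolding disjoint_intervals_def by auto
  then show "\<bar>F (b i) - F (a i)\<bar> \<le> K * (b i - a i)"
    using lipschitz_onD[OF assms(1), of "b i" "a i"] by (simp add: dist_real_def)
qed

lemma abs_cont01_dominated: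
  assumes "abs_cont01 F" "0 < K"
    and dom: "\<And>x y. x \<in> {0..1} \<Longrightarrow> y \<in> {0..1} \<Longrightarrow> \<bar>G x - G y\<bar> \<le> K * \<bar>F x - F y\<bar>"
  shows "abs_cont01 G"
  unfolding abs_cont01_iff
proof (intro allI impI)
  fix \<epsilon> :: real assume "0 < \<epsilon>"
  then obtain \<delta> where "0 < \<delta>" and \<delta>: "\<And>n a b. disjoint_intervals 0 1 {..<n::nat} a b \<Longrightarrow>
      (\<Sum>i<n. b i - a i) < \<delta> \<Longrightarrow> interval_variation F {..<n} a b < \<epsilon> / K"
    using assms(1,2) unfolding abs_cont01_iff by (meson divide_pos_pos)
  show "\<exists>\<delta>>0. \<forall>n a b. disjoint_intervals 0 1 {..<n::nat} a b \<and> (\<Sum>i<n. b i - a i) < \<delta> \<longrightarrow>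
      interval_variation G {..<n} a b < \<epsilon>"
  proof (intro exI[of _ \<delta>] conjI allI impI \<open>0 < \<delta>\<close>)
    fix n :: nat and a b
    assume *: "disjoint_intervals 0 1 {..<n} a b \<and> (\<Sum>i<n. b i - a i) < \<delta>"
    have "interval_variation G {..<n} a b \<le> K * interval_variation F {..<n} a b"
      unfolding interval_variation_def sum_distrib_left
    proof (rule sum_mono)
      fix i assume "i \<in> {..<n}"
      then have "b i \<in> {0..1}" "a i \<in> {0..1}"
        using disjoint_intervalsD[of 0 1 "{..<n}" a b i] * by auto
      then show "\<bar>G (b i) - G (a i)\<bar> \<le> K * \<bar>F (b i) - F (a i)\<bar>" by (rule dom)
    qed
    also have "\<dots> < K * (\<epsilon> / K)" using \<delta> * \<open>0 < K\<close> by (intro mult_strict_left_mono) auto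
    finally show "interval_variation G {..<n} a b < \<epsilon>" using \<open>0 < K\<close> by simp
  qed
qed

lemma abs_cont01_of_abs_cont01_ln:
  assumes "abs_cont01 (\<lambda>x. ln (F x))"
    and "\<And>x. x \<in> {0..1} \<Longrightarrow> 0 < F x" "\<And>x. x \<in> {0..1} \<Longrightarrow> F x \<le> B"
  shows "abs_cont01 F"
proof (rule abs_cont01_dominated[OF assms(1)])
  show "0 < B" using assms(2,3)[of 0] by simp
  fix x y :: real assume "x \<in> {0..1}" "y \<in> {0..1}"
  then have "0 < F x" "F x \<le> B" "0 < F y" "F y \<le> B" using assms(2,3) by auto
  then have "ln (F x) \<in> {..ln B}" "ln (F y) \<in> {..ln B}" by auto
  from lipschitz_onD[OF exp_lipschitz this]
  show "\<bar>F x - F y\<bar> \<le> B * \<bar>ln (F x) - ln (F y)\<bar>"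
    using \<open>0 < F x\<close> \<open>0 < F y\<close> \<open>0 < B\<close> by (simp add: dist_real_def)
qed

lemma variation_sum_le_clipped:
  assumes P: "is_partition 0 1 m xs" and "0 < m" "0 \<le> \<eta>" "\<eta> \<le> xs 1"
  defines "a \<equiv> \<lambda>i. max \<eta> (xs i)" and "b \<equiv> \<lambda>i. max \<eta> (xs (Suc i))"
  shows "disjoint_intervals \<eta> 1 {..<m} a b"
    and "variation_sum \<phi> m xs \<le> interval_variation \<phi> {..<m} a b + \<bar>\<phi> \<eta> - \<phi> 0\<bar>"
proof -
  have x0: "xs 0 = 0" using P unfolding is_partition_def by simp
  have xs_ge: "\<eta> \<le> xs i" if "1 \<le> i" "i \<le> m" for i
    using is_partition_mono[OF P, of 1 i] that assms(4) by auto
  show "disjoint_intervals \<eta> 1 {..<m} a b"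
    unfolding a_def b_def using xs_ge[of 1] \<open>0 < m\<close> is_partition_range[OF P, of 1]
    by (intro disjoint_intervals_mono_image[OF disjoint_intervals_partition[OF P]])
      (auto simp: mono_def)
  have "variation_sum \<phi> m xs - interval_variation \<phi> {..<m} a b
      = (\<Sum>i<m. \<bar>\<phi> (xs (Suc i)) - \<phi> (xs i)\<bar> - \<bar>\<phi> (b i) - \<phi> (a i)\<bar>)"
    unfolding variation_sum_def interval_variation_def by (simp add: sum_subtractf)
  also have "\<dots> \<le> (\<Sum>i<m. if i = 0 then \<bar>\<phi> \<eta> - \<phi> 0\<bar> else 0)"
  proof (rule sum_mono)
    fix i assume "i \<in> {..<m}"
    then have "b i = xs (Suc i)" "i \<noteq> 0 \<Longrightarrow> a i = xs i" "a 0 = \<eta>"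
      using xs_ge[of "Suc i"] xs_ge[of i] x0 assms(3) unfolding a_def b_def by auto
    then show "\<bar>\<phi> (xs (Suc i)) - \<phi> (xs i)\<bar> - \<bar>\<phi> (b i) - \<phi> (a i)\<bar>
        \<le> (if i = 0 then \<bar>\<phi> \<eta> - \<phi> 0\<bar> else 0)"
      using x0 by auto
  qed
  also have "\<dots> = \<bar>\<phi> \<eta> - \<phi> 0\<bar>" using \<open>0 < m\<close> by simp
  finally show "variation_sum \<phi> m xs \<le> interval_variation \<phi> {..<m} a b + \<bar>\<phi> \<eta> - \<phi> 0\<bar>"
    by simp
qed

text \<open>A partition almost realising V01 can be moved off [0, \<eta>] at the cost of one small jump,
  after which any intervals in [0, \<eta>] can be added to it.\<close>

lemma interval_variation_small_near_0:
  fixes \<phi> :: "real \<Rightarrow> real"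
  assumes cont: "continuous_on {0..1} \<phi>" and bv: "bv01 \<phi>" and "\<epsilon> > 0"
  obtains \<eta> where "0 < \<eta>" "\<eta> \<le> 1"
    "\<And>(J::'j set) c d. disjoint_intervals 0 \<eta> J c d \<Longrightarrow> interval_variation \<phi> J c d < \<epsilon>"
proof -
  have "V01 \<phi> - \<epsilon>/2 < Sup (var_sums \<phi>)" using \<open>\<epsilon> > 0\<close> unfolding V01_def by simp
  then obtain m xs where P: "is_partition 0 1 m xs" and near_sup: "V01 \<phi> - \<epsilon>/2 < variation_sum \<phi> m xs"
    using less_cSup_iff[of "var_sums \<phi>"] bv is_partition_trivial[of 0 1]
    unfolding bv01_def var_sums_eq by fastforce
  then have "0 < m" by (cases m) (auto simp: is_partition_def)
  then have x1: "0 < xs 1" "xs 1 \<le> 1"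
    using P is_partition_range[OF P, of 1] unfolding is_partition_def by auto
  obtain \<eta>1 where "\<eta>1 > 0" and \<eta>1: "\<And>x. x \<in> {0..1} \<Longrightarrow> \<bar>x\<bar> < \<eta>1 \<Longrightarrow> \<bar>\<phi> x - \<phi> 0\<bar> < \<epsilon>/2"
    using cont \<open>\<epsilon> > 0\<close> unfolding continuous_on_iff dist_real_def
    by (metis atLeastAtMost_iff diff_zero half_gt_zero order_refl zero_le_one)
  define \<eta> where "\<eta> = min (xs 1) (\<eta>1/2)"
  have \<eta>: "0 < \<eta>" "\<eta> \<le> 1" "\<eta> \<le> xs 1" "\<bar>\<phi> \<eta> - \<phi> 0\<bar> < \<epsilon>/2"
    using x1 \<open>\<eta>1 > 0\<close> \<eta>1[of \<eta>] unfolding \<eta>_def by auto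
  note clipped = variation_sum_le_clipped[OF P \<open>0 < m\<close> less_imp_le[OF \<eta>(1)] \<eta>(3)]
  show ?thesis
  proof (rule that[OF \<eta>(1,2)])
    fix J :: "'j set" and c d assume "disjoint_intervals 0 \<eta> J c d"
    from disjoint_intervals_Un[OF this clipped(1)] \<eta>
    have "interval_variation \<phi> J c d
        + interval_variation \<phi> {..<m} (\<lambda>i. max \<eta> (xs i)) (\<lambda>i. max \<eta> (xs (Suc i))) \<le> V01 \<phi>"
      using interval_variation_le_V01[OF bv] by fastforce
    then show "interval_variation \<phi> J c d < \<epsilon>" using clipped(2)[of \<phi>] near_sup \<eta>(4) by linarith
  qed
qed

lemma interval_variation_small_near_1:
  fixes \<phi> :: "real \<Rightarrow> real"
  assumes cont: "continuous_on {0..1} \<phi>" and bv: "bv01 \<phi>" and "\<epsilon> > 0"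
  obtains \<eta> where "0 < \<eta>" "\<eta> \<le> 1"
    "\<And>(J::'j set) c d. disjoint_intervals (1 - \<eta>) 1 J c d \<Longrightarrow> interval_variation \<phi> J c d < \<epsilon>"
proof -
  define \<psi> where "\<psi> x = \<phi> (1 - x)" for x
  have "continuous_on {0..1} \<psi>" unfolding \<psi>_def
    by (rule continuous_on_compose2[OF cont]) (auto intro!: continuous_intros)
  moreover have "bv01 \<psi>"
  proof (rule bv01_of_variation_sum_bound(1))
    fix m xs assume P: "is_partition 0 1 m xs"
    have "variation_sum \<psi> m xs = variation_sum \<phi> m (\<lambda>i. 1 - xs (m - i))"
      unfolding \<psi>_def using is_partition_reflect(2)[OF P, of "\<lambda>x. \<phi> (1 - x)"] by simp
    then show "variation_sum \<psi> m xs \<le> V01 \<phi>"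
      using variation_sum_le_V01[OF bv is_partition_reflect(1)[OF P]] by simp
  qed
  ultimately obtain \<eta> where \<eta>: "0 < \<eta>" "\<eta> \<le> 1"
    "\<And>(J::'j set) c d. disjoint_intervals 0 \<eta> J c d \<Longrightarrow> interval_variation \<psi> J c d < \<epsilon>"
    using interval_variation_small_near_0 \<open>\<epsilon> > 0\<close> by blast
  show ?thesis
  proof (rule that[OF \<eta>(1,2)])
    fix J :: "'j set" and c d assume "disjoint_intervals (1 - \<eta>) 1 J c d"
    then have "disjoint_intervals 0 \<eta> J (\<lambda>j. 1 - d j) (\<lambda>j. 1 - c j)"
      unfolding disjoint_intervals_def by force
    from \<eta>(3)[OF this] show "interval_variation \<phi> J c d < \<epsilon>"
      unfolding interval_variation_def \<psi>_def by (simp add: abs_minus_commute)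
  qed
qed

section \<open>A bump perturbation of the identity\<close>

definition bump :: "real \<Rightarrow> real" where
  "bump x = (1 - cos (2 * pi * x)) / 2"

text \<open>As bump vanishes at 0 and 1 and has period 1, push t is for small t \<ge> 0 a diffeomorphism of I
  and, as a lift, of S^1.\<close>

definition push :: "real \<Rightarrow> real \<Rightarrow> real" where
  "push t x = x + t * bump x"

definition push_deriv :: "real \<Rightarrow> real \<Rightarrow> real" where
  "push_deriv t x = 1 + t * pi * sin (2 * pi * x)"

lemma bump_eq_sin_sq: "bump x = sin (pi * x) ^ 2"
  using cos_double_sin[of "pi * x"] unfolding bump_def by (simp add: mult.assoc)

lemma bump_bounds: "0 \<le> bump x" "bump x \<le> 1"
  unfolding bump_def by auto

lemma bump_0_1 [simp]: "bump 0 = 0" "bump 1 = 0"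
  unfolding bump_def by auto

lemma bump_periodic: "bump (x + 1) = bump x"
  unfolding bump_def by (simp add: distrib_left cos_add)

lemma bump_pos:
  assumes "0 < x" "x < 1"
  shows "0 < bump x"
proof -
  have "0 < sin (pi * x)" using assms by (intro sin_gt_zero) auto
  then show ?thesis unfolding bump_eq_sin_sq by simp
qed

lemma bump_bounded_below:
  assumes "0 < \<eta>" "\<eta> \<le> 1 - \<eta>"
  obtains c where "0 < c" "\<And>x. x \<in> {\<eta>..1-\<eta>} \<Longrightarrow> c \<le> bump x"
proof -
  have "continuous_on {\<eta>..1-\<eta>} bump" unfolding bump_def by (auto intro!: continuous_intros)
  obtain x0 where "x0 \<in> {\<eta>..1-\<eta>}" "\<forall>y\<in>{\<eta>..1-\<eta>}. bump x0 \<le> bump y"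
    using continuous_attains_inf[OF compact_Icc _ \<open>continuous_on {\<eta>..1-\<eta>} bump\<close>] assms(2) by auto
  moreover have "0 < bump x0" using bump_pos \<open>x0 \<in> {\<eta>..1-\<eta>}\<close> assms by force
  ultimately show ?thesis using that by blast
qed

lemma bump_le_distance_to_1:
  assumes "x \<in> {0..1}"
  shows "bump x \<le> pi * (1 - x)"
proof -
  have "0 \<le> sin (pi * x)" using assms by (intro sin_ge_zero) auto
  have "sin (pi * x) = sin (pi * (1 - x))"
    by (metis sin_pi_minus right_diff_distrib mult.right_neutral)
  also have "\<dots> \<le> pi * (1 - x)" using assms by (intro sin_x_le_x) auto
  moreover have "sin (pi * x) ^ 2 \<le> sin (pi * x)"
    using \<open>0 \<le> sin (pi * x)\<close> sin_le_one[of "pi * x"] by (simp add: power2_eq_square mult_left_le)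
  ultimately show ?thesis unfolding bump_eq_sin_sq by linarith
qed

lemma bump_has_derivative: "(bump has_real_derivative pi * sin (2 * pi * x)) (at x within S)"
  unfolding bump_def by (auto intro!: derivative_eq_intros)

lemma bump_lipschitz: "pi-lipschitz_on S bump"
  using lipschitz_on_real_deriv_bound[of UNIV bump "\<lambda>x. pi * sin (2 * pi * x)" pi]
  by (force intro: lipschitz_on_subset bump_has_derivative simp: abs_mult mult_left_le)

lemma push_fixes_0_1 [simp]: "push 0 x = x" "push t 0 = 0" "push t 1 = 1"
  unfolding push_def by auto

lemma push_in_01:
  assumes "0 \<le> t" "t \<le> 1/pi" "x \<in> {0..1}"
  shows "push t x \<in> {0..1}"
proof -
  have "t * bump x \<le> t * (pi * (1 - x))"
    using bump_le_distance_to_1[OF assms(3)] assms(1) by (rule mult_left_mono)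
  also have "\<dots> = (t * pi) * (1 - x)" by simp
  also have "\<dots> \<le> 1 * (1 - x)"
    using assms by (intro mult_right_mono) (auto simp: field_simps)
  finally show ?thesis using assms bump_bounds[of x] unfolding push_def by auto
qed

lemma continuous_on_push_path:
  assumes "continuous_on {0..1} \<phi>" "0 \<le> T" "T \<le> 1/pi" "x \<in> {0..1}"
  shows "continuous_on {0..T} (\<lambda>t. \<phi> (push t x))"
  using assms push_in_01
  by (intro continuous_on_compose2[OF assms(1)]) (auto simp: push_def intro!: continuous_intros)

lemma push_strict_mono:
  assumes "0 \<le> t" "t < 1/pi" "x < y"
  shows "push t x < push t y"
proof -
  have "t * \<bar>bump y - bump x\<bar> \<le> t * (pi * (y - x))"
    using lipschitz_onD[OF bump_lipschitz, of y UNIV x] assms(1,3)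
    by (intro mult_left_mono) (auto simp: dist_real_def)
  also have "\<dots> = (t * pi) * (y - x)" by simp
  also have "\<dots> < 1 * (y - x)"
    using assms by (intro mult_strict_right_mono) (auto simp: field_simps)
  finally show ?thesis
    using abs_le_iff[of "bump y - bump x"] assms(1) unfolding push_def
    by (smt (verit, best) mult_left_mono right_diff_distrib)
qed

lemma push_has_derivative: "(push t has_real_derivative push_deriv t x) (at x within S)"
  unfolding push_def push_deriv_def
  by (auto intro!: derivative_eq_intros bump_has_derivative simp: algebra_simps)

lemma push_lipschitz: "0 \<le> t \<Longrightarrow> (1 + t * pi)-lipschitz_on S (push t)"
  unfolding push_def
  by (intro lipschitz_intros bump_lipschitz) auto

lemma push_deriv_ge_half:
  assumes "0 \<le> t" "t \<le> 1/(2*pi)"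
  shows "1/2 \<le> push_deriv t x"
proof -
  have "t * pi \<le> 1/2" using assms pi_gt_zero by (simp add: field_simps)
  moreover have "\<bar>t * pi * sin (2*pi*x)\<bar> \<le> t * pi"
    using assms(1) by (simp add: abs_mult mult_left_le)
  ultimately show ?thesis unfolding push_deriv_def by linarith
qed

lemma ln_push_deriv_lipschitz:
  assumes "0 \<le> t" "t \<le> 1/(2*pi)"
  shows "(4 * pi\<^sup>2 * t)-lipschitz_on S (\<lambda>x. ln (push_deriv t x))"
proof -
  have "((\<lambda>x. ln (push_deriv t x)) has_real_derivative 2 * pi\<^sup>2 * t * cos (2*pi*x) / push_deriv t x)
      (at x within UNIV)" for x
    using push_deriv_ge_half[OF assms, of x] unfolding push_deriv_def
    by (auto intro!: derivative_eq_intros simp: power2_eq_square)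
  then show ?thesis
  proof (intro lipschitz_on_subset[OF lipschitz_on_real_deriv_bound[of UNIV]])
    fix x
    have "\<bar>2 * pi\<^sup>2 * t * cos (2*pi*x)\<bar> \<le> 2 * pi\<^sup>2 * t"
      using assms(1) by (simp add: abs_mult mult_left_le)
    also have "\<dots> = (4 * pi\<^sup>2 * t) * (1/2)" by simp
    also have "\<dots> \<le> (4 * pi\<^sup>2 * t) * push_deriv t x"
      using push_deriv_ge_half[OF assms] assms(1) by (intro mult_left_mono) auto
    finally show "\<bar>2 * pi\<^sup>2 * t * cos (2*pi*x) / push_deriv t x\<bar> \<le> 4 * pi\<^sup>2 * t"
      using push_deriv_ge_half[OF assms, of x] by (simp add: abs_divide divide_le_eq)
  qed (use assms in auto)
qed

lemma bv01_comp_push: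
  assumes "bv01 \<phi>" "0 \<le> t" "t < 1/pi"
  shows "bv01 (\<lambda>x. \<phi> (push t x))"
proof (rule bv01_of_variation_sum_bound(1))
  fix m xs assume "is_partition 0 1 m xs"
  then have "is_partition 0 1 m (\<lambda>i. push t (xs i))"
    by (rule is_partition_image) (auto intro: push_strict_mono[OF assms(2,3)])
  from variation_sum_le_V01[OF assms(1) this]
  show "variation_sum (\<lambda>x. \<phi> (push t x)) m xs \<le> V01 \<phi>"
    by (simp only: variation_sum_comp)
qed

section \<open>Averaging along the perturbation\<close>

definition push_average :: "(real \<Rightarrow> real) \<Rightarrow> real \<Rightarrow> real \<Rightarrow> real" where
  "push_average \<phi> T x = integral {0..T} (\<lambda>t. \<phi> (push t x)) / T"

lemma primitive_lipschitz:
  fixes \<phi> :: "real \<Rightarrow> real"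
  assumes "continuous_on {0..1} \<phi>" "\<And>x. x \<in> {0..1} \<Longrightarrow> \<bar>\<phi> x\<bar> \<le> B" "0 \<le> B"
  shows "B-lipschitz_on {0..1} (\<lambda>y. integral {0..y} \<phi>)"
  using assms integral_has_real_derivative[OF assms(1)]
  by (intro lipschitz_on_real_deriv_bound[where f' = \<phi>]) auto

text \<open>Substituting y = x + t bump x turns the mean of \<phi> along the path t \<mapsto> push t x into a
  difference quotient of a primitive of \<phi>.\<close>

lemma push_average_eq:
  fixes \<phi> :: "real \<Rightarrow> real"
  assumes cont: "continuous_on {0..1} \<phi>" and T: "0 < T" "T \<le> 1/pi"
    and x: "x \<in> {0..1}" "0 < bump x"
  shows "push_average \<phi> T x
    = (integral {0..push T x} \<phi> - integral {0..x} \<phi>) / (T * bump x)"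
proof -
  define \<Phi> where "\<Phi> y = integral {0..y} \<phi>" for y
  have push_01: "x + t * bump x \<in> {0..1}" if "t \<in> {0..T}" for t
    using push_in_01[of t x] that T x unfolding push_def by auto
  have "((\<lambda>t. \<Phi> (x + t * bump x) / bump x) has_vector_derivative \<phi> (x + t * bump x))
      (at t within {0..T})" if "t \<in> {0..T}" for t
  proof -
    have outer: "(\<Phi> has_real_derivative \<phi> (x + t * bump x))
        (at (x + t * bump x) within (\<lambda>t. x + t * bump x) ` {0..T})"
      unfolding \<Phi>_def using push_01 that
      by (intro has_field_derivative_subset[OF integral_has_real_derivative[OF cont]]) auto
    have inner: "((\<lambda>t. x + t * bump x) has_real_derivative bump x) (at t within {0..T})"
      by (auto intro!: derivative_eq_intros)
    have "((\<lambda>t. \<Phi> (x + t * bump x)) has_real_derivative \<phi> (x + t * bump x) * bump x)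
        (at t within {0..T})"
      using DERIV_image_chain[OF outer inner] by (simp add: o_def)
    from DERIV_cdivide[OF this, of "bump x"] show ?thesis
      using x(2) by (simp add: has_real_derivative_iff_has_vector_derivative)
  qed
  from fundamental_theorem_of_calculus[OF _ this] T
  have "((\<lambda>t. \<phi> (push t x)) has_integral (\<Phi> (push T x) - \<Phi> x) / bump x) {0..T}"
    unfolding push_def by (simp add: diff_divide_distrib)
  then show ?thesis
    unfolding push_average_def \<Phi>_def by (simp add: integral_unique divide_divide_eq_left mult.commute)
qed

lemma push_average_deviation:
  fixes \<phi> :: "real \<Rightarrow> real"
  assumes "continuous_on {0..1} \<phi>" "0 < T" "T \<le> 1/pi" "x \<in> {0..1}"
  shows "\<phi> x - push_average \<phi> T x = integral {0..T} (\<lambda>t. \<phi> x - \<phi> (push t x)) / T"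
proof -
  have "(\<lambda>t. \<phi> (push t x)) integrable_on {0..T}"
    using continuous_on_push_path[OF assms(1) _ assms(3,4)] assms(2)
    by (intro integrable_continuous_real) simp
  from has_integral_diff[OF has_integral_const_real[of "\<phi> x" 0 T] integrable_integral[OF this]]
  have "integral {0..T} (\<lambda>t. \<phi> x - \<phi> (push t x)) = T * \<phi> x - integral {0..T} (\<lambda>t. \<phi> (push t x))"
    using assms(2) by (simp add: integral_unique)
  then show ?thesis using assms(2) unfolding push_average_def by (simp add: field_simps)
qed

lemma push_average_lipschitz:
  fixes \<phi> :: "real \<Rightarrow> real"
  assumes cont: "continuous_on {0..1} \<phi>" and T: "0 < T" "T \<le> 1/pi" and \<eta>: "0 < \<eta>" "\<eta> \<le> 1 - \<eta>"
  obtains K where "K-lipschitz_on {\<eta>..1-\<eta>} (push_average \<phi> T)"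
proof -
  define S where "S = {\<eta>..1-\<eta>}"
  have S01: "S \<subseteq> {0..1}" and pushS: "push T ` S \<subseteq> {0..1}"
    using \<eta> push_in_01[of T] T unfolding S_def by auto
  obtain B where B: "\<And>x. x \<in> {0..1} \<Longrightarrow> \<bar>\<phi> x\<bar> \<le> B" "0 \<le> B"
    using compact_imp_bounded[OF compact_continuous_image[OF cont compact_Icc]]
    unfolding bounded_iff by (metis abs_ge_zero image_eqI order_trans real_norm_def)
  define \<Phi> where "\<Phi> y = integral {0..y} \<phi>" for y
  have \<Phi>: "B-lipschitz_on {0..1} \<Phi>"
    unfolding \<Phi>_def by (rule primitive_lipschitz[OF cont B])
  obtain c where "0 < c" and c: "\<And>x. x \<in> S \<Longrightarrow> c \<le> bump x"
    using bump_bounded_below[OF \<eta>] unfolding S_def by blast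
  have num: "(B * (1 + T * pi) + B)-lipschitz_on S (\<lambda>x. \<Phi> (push T x) - \<Phi> x)"
    using push_lipschitz[of T S] T lipschitz_on_subset[OF \<Phi> pushS] lipschitz_on_subset[OF \<Phi> S01]
    by (intro lipschitz_on_diff lipschitz_on_compose2) auto
  have num_bound: "\<bar>\<Phi> (push T x) - \<Phi> x\<bar> \<le> B * T" if "x \<in> S" for x
  proof -
    have "\<bar>\<Phi> (push T x) - \<Phi> x\<bar> \<le> B * (T * bump x)"
      using lipschitz_onD[OF \<Phi>, of "push T x" x] pushS S01 that T bump_bounds[of x]
      by (auto simp: dist_real_def push_def image_subset_iff)
    also have "\<dots> \<le> B * T"
      using B(2) T bump_bounds[of x] by (intro mult_left_mono) (auto simp: mult_left_le)
    finally show ?thesis .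
  qed
  have den: "(T * pi)-lipschitz_on S (\<lambda>x. T * bump x)"
    using T by (intro lipschitz_on_cmult_real_nonneg bump_lipschitz) auto
  have den_bound: "T * c \<le> T * bump x" if "x \<in> S" for x
    using c[OF that] T by simp
  obtain K where K: "K-lipschitz_on S (\<lambda>x. (\<Phi> (push T x) - \<Phi> x) / (T * bump x))"
    using lipschitz_on_divide[OF num den num_bound den_bound] T \<open>0 < c\<close> B(2) by auto
  have "push_average \<phi> T x = (\<Phi> (push T x) - \<Phi> x) / (T * bump x)" if "x \<in> S" for x
  proof -
    have "x \<in> {0..1}" "0 < bump x" using S01 that c[OF that] \<open>0 < c\<close> by auto
    from push_average_eq[OF cont T this] show ?thesis unfolding \<Phi>_def .
  qed
  from lipschitz_on_transform[OF K this] show ?thesis using that unfolding S_def by blast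
qed

lemma interval_variation_average_le:
  fixes F :: "real \<Rightarrow> real \<Rightarrow> real"
  assumes "0 < T" "disjoint_intervals u v I a b"
    and "\<And>x. x \<in> {u..v} \<Longrightarrow> continuous_on {0..T} (\<lambda>t. F t x)"
    and "\<And>t. t \<in> {0..T} \<Longrightarrow> interval_variation (F t) I a b \<le> e"
  shows "interval_variation (\<lambda>x. integral {0..T} (\<lambda>t. F t x) / T) I a b \<le> e"
proof -
  have fin: "finite I" using assms(2) unfolding disjoint_intervals_def by auto
  have ends: "a i \<in> {u..v}" "b i \<in> {u..v}" if "i \<in> I" for i
    using assms(2) that unfolding disjoint_intervals_def by auto
  define G where "G i t = F t (b i) - F t (a i)" for i t
  have G_int: "G i integrable_on {0..T}" "(\<lambda>t. \<bar>G i t\<bar>) integrable_on {0..T}" if "i \<in> I" for i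
    unfolding G_def using assms(3)[OF ends(1)[OF that]] assms(3)[OF ends(2)[OF that]]
    by (auto intro!: integrable_continuous_real continuous_intros)
  have "interval_variation (\<lambda>x. integral {0..T} (\<lambda>t. F t x) / T) I a b
      = (\<Sum>i\<in>I. \<bar>integral {0..T} (G i)\<bar> / T)"
    unfolding interval_variation_def G_def using assms(1,3) ends
    by (intro sum.cong refl)
      (simp add: abs_divide integrable_continuous_real flip: diff_divide_distrib integral_diff)
  also have "\<dots> \<le> (\<Sum>i\<in>I. integral {0..T} (\<lambda>t. \<bar>G i t\<bar>) / T)"
    using G_int assms(1) by (intro sum_mono divide_right_mono integral_norm_bound_integral[THEN ord_eq_le_trans[rotated], OF _ _ _ real_norm_def[symmetric]]) auto
  also have "\<dots> = integral {0..T} (\<lambda>t. \<Sum>i\<in>I. \<bar>G i t\<bar>) / T"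
    by (subst integral_sum[OF fin]) (use G_int in \<open>auto simp: sum_divide_distrib\<close>)
  also have "\<dots> \<le> integral {0..T} (\<lambda>t. e) / T"
    using assms(1,4) G_int fin unfolding interval_variation_def G_def
    by (intro divide_right_mono integral_le integrable_sum) auto
  also have "\<dots> = e" using assms(1) by simp
  finally show ?thesis .
qed

definition push_variation_vanishes :: "(real \<Rightarrow> real) \<Rightarrow> bool" where
  "push_variation_vanishes \<phi> \<longleftrightarrow> (\<forall>\<epsilon>>0. \<exists>T>0. \<forall>t\<in>{0<..T}. \<forall>m xs. is_partition 0 1 m xs \<longrightarrow>
     variation_sum (\<lambda>x. \<phi> x - \<phi> (push t x)) m xs \<le> \<epsilon>)"

lemma interval_variation_small_in_middle:
  fixes \<phi> :: "real \<Rightarrow> real"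
  assumes cont: "continuous_on {0..1} \<phi>" and push: "push_variation_vanishes \<phi>"
    and \<eta>: "0 < \<eta>" "\<eta> \<le> 1 - \<eta>" and "0 < \<epsilon>"
  obtains \<delta> where "0 < \<delta>" "\<And>(I::'i set) a b. disjoint_intervals \<eta> (1 - \<eta>) I a b \<Longrightarrow>
      (\<Sum>i\<in>I. b i - a i) < \<delta> \<Longrightarrow> interval_variation \<phi> I a b \<le> \<epsilon>"
proof -
  obtain T0 where "0 < T0" and T0: "\<And>t m xs. t \<in> {0<..T0} \<Longrightarrow> is_partition 0 1 m xs \<Longrightarrow>
      variation_sum (\<lambda>x. \<phi> x - \<phi> (push t x)) m xs \<le> \<epsilon>/2"
    using push \<open>0 < \<epsilon>\<close> unfolding push_variation_vanishes_def by (meson half_gt_zero)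
  define T where "T = min T0 (1/pi)"
  have T: "0 < T" "T \<le> 1/pi" "T \<le> T0" using \<open>0 < T0\<close> unfolding T_def by auto
  obtain K where K: "K-lipschitz_on {\<eta>..1-\<eta>} (push_average \<phi> T)"
    using push_average_lipschitz[OF cont T(1,2) \<eta>] .
  have "0 \<le> K" using lipschitz_on_nonneg[OF K] .
  define \<delta> where "\<delta> = \<epsilon> / (2 * K + 2)"
  have "0 < \<delta>" "K * \<delta> \<le> \<epsilon>/2" unfolding \<delta>_def using \<open>0 \<le> K\<close> \<open>0 < \<epsilon>\<close> by (auto simp: field_simps)
  show ?thesis
  proof (rule that[OF \<open>0 < \<delta>\<close>])
    fix I :: "'i set" and a b
    assume fam: "disjoint_intervals \<eta> (1 - \<eta>) I a b" and short: "(\<Sum>i\<in>I. b i - a i) < \<delta>"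
    have fam01: "disjoint_intervals 0 1 I a b" using disjoint_intervals_subset[OF fam] \<eta> by auto
    \<comment> \<open>\<phi> is the Lipschitz function push_average \<phi> T plus a mean of the functions \<phi> - \<phi> \<circ> push t\<close>
    have "interval_variation (push_average \<phi> T) I a b \<le> K * (\<Sum>i\<in>I. b i - a i)"
      by (rule interval_variation_le_lipschitz[OF K fam])
    also have "\<dots> \<le> \<epsilon>/2" using short \<open>0 \<le> K\<close> \<open>K * \<delta> \<le> \<epsilon>/2\<close> by (smt (verit) mult_left_mono)
    finally have smooth_part: "interval_variation (push_average \<phi> T) I a b \<le> \<epsilon>/2" .
    have "interval_variation (\<lambda>x. \<phi> x - push_average \<phi> T x) I a b
        = interval_variation (\<lambda>x. integral {0..T} (\<lambda>t. \<phi> x - \<phi> (push t x)) / T) I a b"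
      using push_average_deviation[OF cont T(1,2)] by (rule interval_variation_cong[OF fam01])
    also have "\<dots> \<le> \<epsilon>/2"
    proof (rule interval_variation_average_le[OF T(1) fam01])
      show "continuous_on {0..T} (\<lambda>t. \<phi> x - \<phi> (push t x))" if "x \<in> {0..1}" for x
        using continuous_on_push_path[OF cont _ T(2) that] T(1) by (intro continuous_intros) auto
      fix t assume t: "t \<in> {0..T}"
      show "interval_variation (\<lambda>x. \<phi> x - \<phi> (push t x)) I a b \<le> \<epsilon>/2"
      proof (cases "t = 0")
        case False
        with t T(3) have "t \<in> {0<..T0}" by auto
        from T0[OF this] show ?thesis by (rule interval_variation_le_bound[OF _ fam01])
      qed (use \<open>0 < \<epsilon>\<close> in \<open>simp add: interval_variation_def\<close>)
    qed
    finally have rough_part: "interval_variation (\<lambda>x. \<phi> x - push_average \<phi> T x) I a b \<le> \<epsilon>/2" .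
    show "interval_variation \<phi> I a b \<le> \<epsilon>"
      using interval_variation_add_le[of "push_average \<phi> T" "\<lambda>x. \<phi> x - push_average \<phi> T x" I a b]
        smooth_part rough_part by simp
  qed
qed

lemma disjoint_intervals_split3:
  assumes fam: "disjoint_intervals 0 1 I a b" and \<eta>: "0 \<le> \<eta>" "\<eta> \<le> 1 - \<eta>"
  defines "mid x \<equiv> max \<eta> (min x (1 - \<eta>))"
  shows "disjoint_intervals 0 \<eta> I (\<lambda>i. min (a i) \<eta>) (\<lambda>i. min (b i) \<eta>)"
    and "disjoint_intervals \<eta> (1 - \<eta>) I (\<lambda>i. mid (a i)) (\<lambda>i. mid (b i))"
    and "disjoint_intervals (1 - \<eta>) 1 I (\<lambda>i. max (a i) (1 - \<eta>)) (\<lambda>i. max (b i) (1 - \<eta>))"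
    and "(\<Sum>i\<in>I. mid (b i) - mid (a i)) \<le> (\<Sum>i\<in>I. b i - a i)"
    and "interval_variation F I a b
      \<le> interval_variation F I (\<lambda>i. min (a i) \<eta>) (\<lambda>i. min (b i) \<eta>)
        + interval_variation F I (\<lambda>i. mid (a i)) (\<lambda>i. mid (b i))
        + interval_variation F I (\<lambda>i. max (a i) (1 - \<eta>)) (\<lambda>i. max (b i) (1 - \<eta>))"
proof -
  show "disjoint_intervals 0 \<eta> I (\<lambda>i. min (a i) \<eta>) (\<lambda>i. min (b i) \<eta>)"
    "disjoint_intervals \<eta> (1 - \<eta>) I (\<lambda>i. mid (a i)) (\<lambda>i. mid (b i))"
    "disjoint_intervals (1 - \<eta>) 1 I (\<lambda>i. max (a i) (1 - \<eta>)) (\<lambda>i. max (b i) (1 - \<eta>))"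
    using \<eta> unfolding mid_def by (intro disjoint_intervals_mono_image[OF fam]; auto simp: mono_def)+
  have ordered: "a i \<le> b i" if "i \<in> I" for i using disjoint_intervalsD(2)[OF fam that] .
  show "(\<Sum>i\<in>I. mid (b i) - mid (a i)) \<le> (\<Sum>i\<in>I. b i - a i)"
  proof (rule sum_mono)
    fix i assume "i \<in> I"
    with ordered[of i] show "mid (b i) - mid (a i) \<le> b i - a i"
      unfolding mid_def by (auto simp: min_def max_def)
  qed
  show "interval_variation F I a b
      \<le> interval_variation F I (\<lambda>i. min (a i) \<eta>) (\<lambda>i. min (b i) \<eta>)
        + interval_variation F I (\<lambda>i. mid (a i)) (\<lambda>i. mid (b i))
        + interval_variation F I (\<lambda>i. max (a i) (1 - \<eta>)) (\<lambda>i. max (b i) (1 - \<eta>))"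
    unfolding interval_variation_def sum.distrib[symmetric]
  proof (rule sum_mono)
    fix i assume "i \<in> I"
    have "F (b i) - F (a i) = (F (min (b i) \<eta>) - F (min (a i) \<eta>)) + (F (mid (b i)) - F (mid (a i)))
        + (F (max (b i) (1 - \<eta>)) - F (max (a i) (1 - \<eta>)))"
      using ordered[OF \<open>i \<in> I\<close>] \<eta>(2) unfolding mid_def min_def max_def by (smt (verit))
    then show "\<bar>F (b i) - F (a i)\<bar> \<le> \<bar>F (min (b i) \<eta>) - F (min (a i) \<eta>)\<bar>
        + \<bar>F (mid (b i)) - F (mid (a i))\<bar> + \<bar>F (max (b i) (1 - \<eta>)) - F (max (a i) (1 - \<eta>))\<bar>"
      by linarith
  qed
qed

lemma abs_cont01_if_push_variation_vanishes:
  fixes \<phi> :: "real \<Rightarrow> real"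
  assumes cont: "continuous_on {0..1} \<phi>" and bv: "bv01 \<phi>" and push: "push_variation_vanishes \<phi>"
  shows "abs_cont01 \<phi>"
  unfolding abs_cont01_iff
proof (intro allI impI)
  fix \<epsilon> :: real assume "0 < \<epsilon>"
  then have "0 < \<epsilon>/4" by simp
  obtain \<eta>0 where "0 < \<eta>0" "\<eta>0 \<le> 1" and near_0: "\<And>(J::nat set) c d.
      disjoint_intervals 0 \<eta>0 J c d \<Longrightarrow> interval_variation \<phi> J c d < \<epsilon>/4"
    by (rule interval_variation_small_near_0[where 'j = nat, OF cont bv \<open>0 < \<epsilon>/4\<close>]) blast
  obtain \<eta>1 where "0 < \<eta>1" "\<eta>1 \<le> 1" and near_1: "\<And>(J::nat set) c d.
      disjoint_intervals (1 - \<eta>1) 1 J c d \<Longrightarrow> interval_variation \<phi> J c d < \<epsilon>/4"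
    by (rule interval_variation_small_near_1[where 'j = nat, OF cont bv \<open>0 < \<epsilon>/4\<close>]) blast
  define \<eta> where "\<eta> = min (min \<eta>0 \<eta>1) (1/4)"
  have \<eta>: "0 \<le> \<eta>" "0 < \<eta>" "\<eta> \<le> 1 - \<eta>" "\<eta> \<le> \<eta>0" "\<eta> \<le> \<eta>1"
    using \<open>0 < \<eta>0\<close> \<open>0 < \<eta>1\<close> unfolding \<eta>_def by auto
  obtain \<delta> where "0 < \<delta>" and middle: "\<And>(I::nat set) a b. disjoint_intervals \<eta> (1 - \<eta>) I a b \<Longrightarrow>
      (\<Sum>i\<in>I. b i - a i) < \<delta> \<Longrightarrow> interval_variation \<phi> I a b \<le> \<epsilon>/4"
    by (rule interval_variation_small_in_middle[where 'i = nat, OF cont push \<eta>(2,3) \<open>0 < \<epsilon>/4\<close>]) blast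
  show "\<exists>\<delta>>0. \<forall>n a b. disjoint_intervals 0 1 {..<n::nat} a b \<and> (\<Sum>i<n. b i - a i) < \<delta> \<longrightarrow>
      interval_variation \<phi> {..<n} a b < \<epsilon>"
  proof (intro exI[of _ \<delta>] conjI allI impI \<open>0 < \<delta>\<close>)
    fix n :: nat and a b assume "disjoint_intervals 0 1 {..<n} a b \<and> (\<Sum>i<n. b i - a i) < \<delta>"
    then have fam: "disjoint_intervals 0 1 {..<n} a b" and short: "(\<Sum>i<n. b i - a i) < \<delta>" by auto
    note pieces = disjoint_intervals_split3[OF fam \<eta>(1,3)]
    have "interval_variation \<phi> {..<n} (\<lambda>i. min (a i) \<eta>) (\<lambda>i. min (b i) \<eta>) < \<epsilon>/4"
      using \<eta>(4) by (intro near_0 disjoint_intervals_subset[OF pieces(1)]) auto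
    moreover have "interval_variation \<phi> {..<n} (\<lambda>i. max (a i) (1 - \<eta>)) (\<lambda>i. max (b i) (1 - \<eta>)) < \<epsilon>/4"
      using \<eta>(5) by (intro near_1 disjoint_intervals_subset[OF pieces(3)]) auto
    moreover have "interval_variation \<phi> {..<n}
        (\<lambda>i. max \<eta> (min (a i) (1 - \<eta>))) (\<lambda>i. max \<eta> (min (b i) (1 - \<eta>))) \<le> \<epsilon>/4"
      using pieces(2,4) short by (intro middle) auto
    ultimately show "interval_variation \<phi> {..<n} a b < \<epsilon>" using pieces(5)[of \<phi>] \<open>0 < \<epsilon>\<close> by linarith
  qed
qed

section \<open>Derivatives and the metric on diffeomorphisms\<close>

lemma D_eqI:
  assumes "(g has_real_derivative d) (at x within {0..1})" "x \<in> {0..1}"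
  shows "D g x = d"
  using vector_derivative_within_cbox[of 0 1 x g d] assms
  by (simp add: D_def has_real_derivative_iff_has_vector_derivative)

lemma Diff1_D:
  assumes "g \<in> Diff1 M"
  shows "continuous_on {0..1} (D g)"
    and "\<And>x. x \<in> {0..1} \<Longrightarrow> (g has_real_derivative D g x) (at x within {0..1})"
    and "\<And>x. x \<in> {0..1} \<Longrightarrow> 0 < D g x"
proof -
  obtain g' where cont: "continuous_on {0..1} g'"
    and g': "\<And>x. x \<in> {0..1} \<Longrightarrow> (g has_real_derivative g' x) (at x within {0..1}) \<and> 0 < g' x"
  proof (cases M)
    case Circ
    then obtain G' where "continuous_on UNIV G'" "\<And>x. (g has_real_derivative G' x) (at x) \<and> 0 < G' x"
      using assms by auto
    then show ?thesis
      using that[of G'] continuous_on_subset has_field_derivative_at_within by blast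
  qed (use assms that in auto)
  have D: "D g x = g' x" if "x \<in> {0..1}" for x
    by (rule D_eqI) (use g' that in auto)
  show "continuous_on {0..1} (D g)"
    by (rule continuous_on_eq[OF cont]) (simp add: D)
  show "\<And>x. x \<in> {0..1} \<Longrightarrow> (g has_real_derivative D g x) (at x within {0..1})"
    "\<And>x. x \<in> {0..1} \<Longrightarrow> 0 < D g x"
    using g' D by auto
qed

lemma Diff1_D_bounds:
  assumes "g \<in> Diff1 M"
  obtains c B where "0 < c" "\<And>x. x \<in> {0..1} \<Longrightarrow> c \<le> D g x" "\<And>x. x \<in> {0..1} \<Longrightarrow> D g x \<le> B"
proof -
  obtain x0 where "x0 \<in> {0..1}" and x0: "\<forall>y\<in>{0..1}. D g x0 \<le> D g y"
    using continuous_attains_inf[OF compact_Icc _ Diff1_D(1)[OF assms]] by auto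
  obtain x1 where x1: "\<forall>y\<in>{0..1}. D g y \<le> D g x1"
    using continuous_attains_sup[OF compact_Icc _ Diff1_D(1)[OF assms]] by auto
  show ?thesis
    by (rule that[of "D g x0" "D g x1"]) (use x0 x1 Diff1_D(3)[OF assms \<open>x0 \<in> {0..1}\<close>] in auto)
qed

lemma D_compM:
  assumes g: "\<And>y. y \<in> {0..1} \<Longrightarrow> (g has_real_derivative g' y) (at y within {0..1})"
    and h: "(h has_real_derivative h') (at x within {0..1})" "h ` {0..1} \<subseteq> {0..1}"
    and x: "x \<in> {0..1}"
  shows "D (compM M g h) x = g' (h x) * h'"
proof -
  have "(g has_real_derivative g' (h x)) (at (h x) within h ` {0..1})"
    using has_field_derivative_subset[OF g h(2)] h(2) x by blast
  from DERIV_image_chain[OF this h(1)]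
  have "((\<lambda>y. g (h y)) has_real_derivative g' (h x) * h') (at x within {0..1})"
    by (simp add: o_def)
  moreover from DERIV_diff[OF this DERIV_const]
  have "((\<lambda>y. g (h y) - c) has_real_derivative g' (h x) * h') (at x within {0..1})" for c
    by simp
  ultimately show ?thesis using x by (cases M) (auto intro: D_eqI simp: o_def)
qed

lemma norm_cis_diff_le: "cmod (cis a - cis b) \<le> \<bar>a - b\<bar>"
proof -
  have "(cmod (cis a - cis b))\<^sup>2 = (cos a - cos b)\<^sup>2 + (sin a - sin b)\<^sup>2"
    by (simp add: cmod_power2)
  also have "\<dots> = 2 - 2 * cos (a - b)"
    using sin_cos_squared_add[of a] sin_cos_squared_add[of b]
    by (simp add: power2_eq_square algebra_simps cos_diff)
  also have "\<dots> = (2 * sin ((a - b) / 2))\<^sup>2"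
    using cos_double_sin[of "(a - b) / 2", unfolded mult_2 field_sum_of_halves]
    by (simp add: power2_eq_square)
  also have "\<dots> \<le> \<bar>a - b\<bar>\<^sup>2"
  proof -
    have "\<bar>2 * sin ((a - b) / 2)\<bar> \<le> \<bar>a - b\<bar>"
      using abs_sin_x_le_abs_x[of "(a - b) / 2"] by (simp add: abs_mult)
    then show ?thesis by (simp add: abs_le_square_iff)
  qed
  finally show ?thesis by (rule power2_le_imp_le) simp
qed

lemma distM_nonneg: "0 \<le> distM M x y"
  by (cases M) auto

lemma distM_le: "distM M x y \<le> 2 * pi * \<bar>x - y\<bar>"
proof (cases M)
  case Intv
  have "1 * \<bar>x - y\<bar> \<le> (2 * pi) * \<bar>x - y\<bar>" using pi_ge_two by (intro mult_right_mono) auto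
  then show ?thesis using Intv by simp
next
  case Circ
  then have "distM M x y \<le> \<bar>2 * pi * x - 2 * pi * y\<bar>" using norm_cis_diff_le by simp
  then show ?thesis by (simp add: abs_mult flip: right_diff_distrib)
qed

lemma Diff1BV_of_lipschitz_derivative:
  assumes deriv: "\<And>x. (f has_real_derivative f' x) (at x)" and "continuous_on UNIV f'"
    and "\<And>x. 0 < f' x" "L-lipschitz_on {0..1} f'"
    and "f 0 = 0" "f 1 = 1" "\<And>x. f (x + 1) = f x + 1"
  shows "f \<in> Diff1BV M"
proof -
  have "f \<in> Diff1 M"
    using assms continuous_on_subset[OF assms(2)] has_field_derivative_at_within[OF deriv]
    by (cases M) (auto intro!: exI[of _ f'])
  moreover have "bv01 (D f)"
  proof (rule bv01_of_variation_sum_bound(1))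
    fix m xs assume P: "is_partition 0 1 m xs"
    have "variation_sum (D f) m xs = variation_sum f' m xs"
      using D_eqI[OF has_field_derivative_at_within[OF deriv]] by (intro variation_sum_cong[OF P]) auto
    also have "\<dots> \<le> L" by (rule variation_sum_le_lipschitz[OF P assms(4)])
    finally show "variation_sum (D f) m xs \<le> L" .
  qed
  ultimately show ?thesis unfolding Diff1BV_def by blast
qed

lemma id_in_Diff1BV: "(\<lambda>x. x) \<in> Diff1BV M"
  by (rule Diff1BV_of_lipschitz_derivative[where f' = "\<lambda>x. 1" and L = 0])
    (auto intro: lipschitz_on_constant)

lemma push_in_Diff1BV:
  assumes "0 \<le> t" "t \<le> 1/(2*pi)"
  shows "push t \<in> Diff1BV M"
proof (rule Diff1BV_of_lipschitz_derivative[OF push_has_derivative])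
  show "continuous_on UNIV (push_deriv t)"
    unfolding push_deriv_def by (intro continuous_intros)
  show "0 < push_deriv t x" for x
    using push_deriv_ge_half[OF assms, of x] by simp
  have "\<bar>2 * pi\<^sup>2 * t * cos (2 * pi * x)\<bar> \<le> 2 * pi\<^sup>2 * t" for x
    using assms(1) by (simp add: abs_mult mult_left_le)
  then show "(2 * pi\<^sup>2 * t)-lipschitz_on {0..1} (push_deriv t)"
    unfolding push_deriv_def using assms(1)
    by (intro lipschitz_on_real_deriv_bound[where f' = "\<lambda>x. 2 * pi\<^sup>2 * t * cos (2 * pi * x)"])
      (auto intro!: derivative_eq_intros simp: power2_eq_square)
  show "push t (x + 1) = push t x + 1" for x
    unfolding push_def by (simp add: bump_periodic)
qed simp_all

lemma V01_le_dDiff: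
  assumes "bdd_above ((\<lambda>x. distM M (f x) (h x)) ` {0..1})"
  shows "V01 (\<lambda>x. ln (D f x) - ln (D h x)) \<le> dDiff M f h"
proof -
  have "0 \<le> (SUP x\<in>{0..1}. distM M (f x) (h x))"
    using cSUP_upper[OF _ assms, of 0] distM_nonneg[of M "f 0" "h 0"] by simp
  then show ?thesis unfolding dDiff_def BVnorm_def by simp
qed

lemma dDiff_id_push_le:
  assumes t: "0 \<le> t" "t \<le> 1/(2*pi)"
  shows "dDiff M (\<lambda>x. x) (push t) \<le> (2*pi + 4*pi\<^sup>2) * t"
proof -
  have "distM M x (push t x) \<le> 2*pi*t" for x
  proof -
    have "distM M x (push t x) \<le> 2*pi*(t * bump x)"
      using distM_le[of M x "push t x"] t bump_bounds[of x] by (simp add: push_def abs_mult)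
    also have "\<dots> \<le> 2*pi*t" using t bump_bounds[of x] by (simp add: mult_left_le)
    finally show ?thesis .
  qed
  then have sup: "(SUP x\<in>{0..1}. distM M x (push t x)) \<le> 2*pi*t"
    by (intro cSUP_least) auto
  define \<psi> where "\<psi> x = ln (D (\<lambda>x. x) x) - ln (D (push t) x)" for x
  have \<psi>: "\<psi> x = - ln (push_deriv t x)" if "x \<in> {0..1}" for x
    using D_eqI[OF DERIV_ident that] D_eqI[OF push_has_derivative that] unfolding \<psi>_def by simp
  have "V01 \<psi> \<le> 4*pi\<^sup>2*t"
  proof (rule bv01_of_variation_sum_bound(2))
    fix m xs assume P: "is_partition 0 1 m xs"
    have "variation_sum \<psi> m xs = variation_sum (\<lambda>x. - ln (push_deriv t x)) m xs"
      by (rule variation_sum_cong[OF P \<psi>])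
    also have "\<dots> \<le> 4*pi\<^sup>2*t"
      using ln_push_deriv_lipschitz[OF t] by (intro variation_sum_le_lipschitz[OF P]) simp
    finally show "variation_sum \<psi> m xs \<le> 4*pi\<^sup>2*t" .
  qed
  moreover have "\<psi> 0 = 0" using \<psi>[of 0] by (simp add: push_deriv_def)
  ultimately show ?thesis using sup unfolding dDiff_def BVnorm_def \<psi>_def by (simp add: algebra_simps)
qed

lemma bdd_above_distM_compM:
  assumes "continuous_on {0..1} g" "f ` {0..1} \<subseteq> {0..1}" "h ` {0..1} \<subseteq> {0..1}" "f 0 = h 0"
  shows "bdd_above ((\<lambda>x. distM M (compM M g f x) (compM M g h x)) ` {0..1})"
proof -
  obtain B where B: "\<And>x. x \<in> {0..1} \<Longrightarrow> \<bar>g x\<bar> \<le> B"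
    using compact_imp_bounded[OF compact_continuous_image[OF assms(1) compact_Icc]]
    unfolding bounded_iff by (metis image_eqI real_norm_def)
  have bound: "distM M (compM M g f x) (compM M g h x) \<le> 2 * pi * (B + B)" if "x \<in> {0..1}" for x
  proof -
    have "\<bar>compM M g f x - compM M g h x\<bar> = \<bar>g (f x) - g (h x)\<bar>"
      using assms(4) by (cases M) auto
    also have "\<dots> \<le> B + B"
      using B assms(2,3) that abs_triangle_ineq4[of "g (f x)"] by (smt (verit) image_subset_iff)
    finally have "2 * pi * \<bar>compM M g f x - compM M g h x\<bar> \<le> 2 * pi * (B + B)"
      by (intro mult_left_mono) auto
    then show ?thesis using distM_le order_trans by blast
  qed
  show ?thesis by (rule bdd_aboveI2[OF bound])
qed

lemma ln_D_compM_push: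
  assumes g: "\<And>y. y \<in> {0..1} \<Longrightarrow> (g has_real_derivative D g y) (at y within {0..1})"
    and pos: "\<And>y. y \<in> {0..1} \<Longrightarrow> 0 < D g y"
    and t: "0 \<le> t" "t \<le> 1/(2*pi)" and x: "x \<in> {0..1}"
  shows "ln (D (compM M g (\<lambda>x. x)) x) - ln (D (compM M g (push t)) x)
    = ln (D g x) - ln (D g (push t x)) - ln (push_deriv t x)"
proof -
  have "t \<le> 1/pi" using t pi_gt_zero by (simp add: field_simps)
  note push_01 = push_in_01[OF t(1) this]
  have push01: "push t ` {0..1} \<subseteq> {0..1}" using push_01 by auto
  have "D (compM M g (\<lambda>x. x)) x = D g x" "D (compM M g (push t)) x = D g (push t x) * push_deriv t x"
    using D_compM[OF g DERIV_ident _ x] D_compM[OF g push_has_derivative push01 x] by auto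
  moreover have "0 < D g (push t x)" "0 < push_deriv t x"
    using pos[OF push_01[OF x]] push_deriv_ge_half[OF t, of x] by auto
  ultimately show ?thesis by (simp add: ln_mult)
qed

lemma variation_sum_le_dDiff_comp_push:
  assumes g: "\<And>y. y \<in> {0..1} \<Longrightarrow> (g has_real_derivative D g y) (at y within {0..1})"
    and cont: "continuous_on {0..1} g" and pos: "\<And>y. y \<in> {0..1} \<Longrightarrow> 0 < D g y"
    and bv: "bv01 (\<lambda>x. ln (D g x))" and t: "0 < t" "t \<le> 1/(2*pi)"
    and P: "is_partition 0 1 m xs"
  shows "variation_sum (\<lambda>x. ln (D g x) - ln (D g (push t x))) m xs
    \<le> dDiff M (compM M g (\<lambda>x. x)) (compM M g (push t)) + 4*pi\<^sup>2*t"
proof -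
  have t': "0 \<le> t" "t < 1/pi" "t \<le> 1/pi" using t pi_gt_zero by (auto simp: field_simps)
  define \<phi> where "\<phi> x = ln (D g x)" for x
  define \<psi> where "\<psi> x = ln (D (compM M g (\<lambda>x. x)) x) - ln (D (compM M g (push t)) x)" for x
  have \<psi>: "\<psi> x = \<phi> x - \<phi> (push t x) - ln (push_deriv t x)" if "x \<in> {0..1}" for x
    unfolding \<psi>_def \<phi>_def by (rule ln_D_compM_push[OF g pos t'(1) t(2) that])
  have ln_push_deriv: "variation_sum (\<lambda>x. ln (push_deriv t x)) m xs \<le> 4*pi\<^sup>2*t"
    if "is_partition 0 1 m xs" for m xs
    by (rule variation_sum_le_lipschitz[OF that ln_push_deriv_lipschitz[OF t'(1) t(2)]])
  have "bv01 (\<lambda>x. \<phi> x - \<phi> (push t x) - ln (push_deriv t x))"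
    using bv bv01_comp_push[OF bv t'(1,2)] bv01_of_variation_sum_bound(1)[OF ln_push_deriv]
    unfolding \<phi>_def by (intro bv01_diff)
  then have "bv01 \<psi>" by (rule bv01_cong) (simp add: \<psi>)
  have "push t ` {0..1} \<subseteq> {0..1}" using push_in_01[OF t'(1,3)] by auto
  from V01_le_dDiff[OF bdd_above_distM_compM[OF cont _ this]]
  have "V01 \<psi> \<le> dDiff M (compM M g (\<lambda>x. x)) (compM M g (push t))"
    unfolding \<psi>_def by simp
  moreover have "variation_sum (\<lambda>x. \<phi> x - \<phi> (push t x)) m xs
      = variation_sum (\<lambda>x. \<psi> x + ln (push_deriv t x)) m xs"
    using \<psi> by (intro variation_sum_cong[OF P]) auto
  ultimately show ?thesis
    using variation_sum_add_le[of \<psi> "\<lambda>x. ln (push_deriv t x)" m xs]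
      variation_sum_le_V01[OF \<open>bv01 \<psi>\<close> P] ln_push_deriv[OF P] unfolding \<phi>_def by linarith
qed

lemma push_variation_vanishes_if_left_mult_continuous:
  assumes g: "g \<in> Diff1 M" and bv: "bv01 (\<lambda>x. ln (D g x))"
    and cont: "\<forall>\<epsilon>>0. \<exists>\<delta>>0. \<forall>h\<in>Diff1BV M.
      dDiff M (\<lambda>x. x) h < \<delta> \<longrightarrow> dDiff M (compM M g (\<lambda>x. x)) (compM M g h) < \<epsilon>"
  shows "push_variation_vanishes (\<lambda>x. ln (D g x))"
  unfolding push_variation_vanishes_def
proof (intro allI impI)
  have gD: "\<And>y. y \<in> {0..1} \<Longrightarrow> (g has_real_derivative D g y) (at y within {0..1})"
    "\<And>y. y \<in> {0..1} \<Longrightarrow> 0 < D g y"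
    using Diff1_D[OF g] by auto
  have g_cont: "continuous_on {0..1} g" using gD(1) by (rule DERIV_continuous_on)
  fix \<epsilon> :: real assume "0 < \<epsilon>"
  then obtain \<delta> where "0 < \<delta>" and \<delta>: "\<And>h. h \<in> Diff1BV M \<Longrightarrow> dDiff M (\<lambda>x. x) h < \<delta> \<Longrightarrow>
      dDiff M (compM M g (\<lambda>x. x)) (compM M g h) < \<epsilon>/2"
    using cont by (meson half_gt_zero)
  define K where "K = 2*pi + 4*pi\<^sup>2"
  have "0 < K" unfolding K_def by (simp add: add_pos_pos)
  define T where "T = min (1/(2*pi)) (min (\<delta>/(2*K)) (\<epsilon>/(8*pi\<^sup>2)))"
  have "0 < T" unfolding T_def using \<open>0 < \<delta>\<close> \<open>0 < K\<close> \<open>0 < \<epsilon>\<close> by auto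
  show "\<exists>T>0. \<forall>t\<in>{0<..T}. \<forall>m xs. is_partition 0 1 m xs \<longrightarrow>
      variation_sum (\<lambda>x. ln (D g x) - ln (D g (push t x))) m xs \<le> \<epsilon>"
  proof (intro exI[of _ T] conjI ballI allI impI \<open>0 < T\<close>)
    fix t m xs assume "t \<in> {0<..T}" and P: "is_partition 0 1 m xs"
    then have t: "0 < t" "t \<le> 1/(2*pi)" "t \<le> \<delta>/(2*K)" "t \<le> \<epsilon>/(8*pi\<^sup>2)"
      unfolding T_def by auto
    have "dDiff M (\<lambda>x. x) (push t) \<le> K * t"
      unfolding K_def using t by (intro dDiff_id_push_le) auto
    also have "\<dots> \<le> K * (\<delta>/(2*K))" using t \<open>0 < K\<close> by (intro mult_left_mono) auto
    also have "\<dots> < \<delta>" using \<open>0 < K\<close> \<open>0 < \<delta>\<close> by simp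
    finally have "dDiff M (compM M g (\<lambda>x. x)) (compM M g (push t)) < \<epsilon>/2"
      using \<delta> push_in_Diff1BV t by auto
    moreover have "4*pi\<^sup>2*t \<le> \<epsilon>/2"
      using mult_left_mono[OF t(4), of "4*pi\<^sup>2"] by simp
    moreover have "variation_sum (\<lambda>x. ln (D g x) - ln (D g (push t x))) m xs
        \<le> dDiff M (compM M g (\<lambda>x. x)) (compM M g (push t)) + 4*pi\<^sup>2*t"
      using gD by (intro variation_sum_le_dDiff_comp_push[OF _ g_cont _ bv t(1,2) P])
    ultimately show "variation_sum (\<lambda>x. ln (D g x) - ln (D g (push t x))) m xs \<le> \<epsilon>"
      by linarith
  qed
qed

theorem mainTheorem3:
  fixes M :: space and g :: "real \<Rightarrow> real"
  assumes "g \<in> Diff1BV M" and "g \<notin> Diff1AC M"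
  shows "\<not> (\<forall>f\<in>Diff1BV M. \<forall>\<epsilon>>0. \<exists>\<delta>>0. \<forall>h\<in>Diff1BV M.
            dDiff M f h < \<delta> \<longrightarrow> dDiff M (compM M g f) (compM M g h) < \<epsilon>)"
proof
  assume "\<forall>f\<in>Diff1BV M. \<forall>\<epsilon>>0. \<exists>\<delta>>0. \<forall>h\<in>Diff1BV M.
            dDiff M f h < \<delta> \<longrightarrow> dDiff M (compM M g f) (compM M g h) < \<epsilon>"
  from this id_in_Diff1BV have continuous_at_id: "\<forall>\<epsilon>>0. \<exists>\<delta>>0. \<forall>h\<in>Diff1BV M.
      dDiff M (\<lambda>x. x) h < \<delta> \<longrightarrow> dDiff M (compM M g (\<lambda>x. x)) (compM M g h) < \<epsilon>"
    by (rule bspec)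
  have g: "g \<in> Diff1 M" "bv01 (D g)" using assms(1) unfolding Diff1BV_def by auto
  obtain c B where "0 < c" and lower: "\<And>x. x \<in> {0..1} \<Longrightarrow> c \<le> D g x"
    and upper: "\<And>x. x \<in> {0..1} \<Longrightarrow> D g x \<le> B"
    by (rule Diff1_D_bounds[OF g(1)]) blast
  have "continuous_on {0..1} (\<lambda>x. ln (D g x))"
    using Diff1_D(3)[OF g(1)] by (intro continuous_on_ln[OF Diff1_D(1)[OF g(1)]] ballI) (metis less_irrefl)
  moreover have "bv01 (\<lambda>x. ln (D g x))" by (rule bv01_ln[OF g(2) \<open>0 < c\<close>]) (rule lower)
  moreover from g(1) this continuous_at_id have "push_variation_vanishes (\<lambda>x. ln (D g x))"
    by (rule push_variation_vanishes_if_left_mult_continuous)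
  ultimately have "abs_cont01 (\<lambda>x. ln (D g x))" by (rule abs_cont01_if_push_variation_vanishes)
  then have "abs_cont01 (D g)"
    by (rule abs_cont01_of_abs_cont01_ln[where B = B]) (simp_all add: Diff1_D(3)[OF g(1)] upper)
  with assms(1) have "g \<in> Diff1AC M" unfolding Diff1AC_def by (intro CollectI conjI)
  with assms(2) show False by contradiction
qed

end
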